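(* Let $\Theta$ be a typed signature. For every $\varphi\in\mathcal L_{\mathrm{VCL}}(\Theta)$, if $\varphi$ is true at every state of every VCL model over $\Theta$, then $\vdash_{\mathrm{VCL}_\Theta}\varphi$.
   Context: A typed signature is $\Theta=(\mathrm{Ag},X,\{D_x\}_{x\in X})$ with $\mathrm{Ag}$ a finite non-empty set of agents, $X$ a finite set of variables, each $D_x$ finite non-empty. $\overline C=\mathrm{Ag}\setminus C$, $\Sigma_C=\prod_{i\in C}\Sigma_i$ ($\Sigma_\varnothing$ a singleton). $\mathcal L_{\mathrm{VCL}}(\Theta)$: $\varphi::=\top\mid(x{=}c)\mid\neg\varphi\mid\varphi\wedge\psi\mid[C]\varphi$ ($x\in X,c\in D_x,C\subseteq\mathrm{Ag}$). A VCL model is $\mathcal M=(S,\{\Sigma_i\},o,\pi)$ with $S,\Sigma_i\neq\varnothing$, $o:S\times\Sigma_{\mathrm{Ag}}\to S$, $\pi:S\to\prod_x D_x$; $(x{=}c)$ true at $s$ iff $\pi(s)(x)=c$; Boolean clauses usual; $[C]\varphi$ true at $s$ iff $\exists\alpha_C\in\Sigma_C\,\forall\beta_{\overline C}\in\Sigma_{\overline C}$: $\varphi$ true at $o(s,\alpha_C\sqcup\beta_{\overline C})$. The Hilbert system $\mathrm{VCL}_\Theta$ has: all instances of classical propositional tautologies; for $C,D\subseteq\mathrm{Ag}$: (C1) $[C](\varphi\wedge\psi)\to[C]\varphi$; (C2) $\neg[C]\bot$; (C3) $[C]\top$; (C4) $[C]\varphi\wedge[D]\psi\to[C\cup D](\varphi\wedge\psi)$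 when $C\cap D=\varnothing$; (C5) $\neg[\varnothing]\neg\varphi\to[\mathrm{Ag}]\varphi$; (V1) $\bigvee_{c\in D_x}(x{=}c)$; (V2) $(x{=}c)\to\neg(x{=}d)$ for distinct $c,d\in D_x$; rules MP and RE (from $\vdash\varphi\leftrightarrow\psi$ infer $\vdash[C]\varphi\leftrightarrow[C]\psi$). *)

theory Defs
  imports "HOL-Library.FuncSet"
begin

datatype ('a, 'x, 'v) fm =
    Top
  | Eq 'x 'v
  | Neg "('a, 'x, 'v) fm"
  | And "('a, 'x, 'v) fm" "('a, 'x, 'v) fm"
  | Box "'a set" "('a, 'x, 'v) fm"

definition Bot :: "('a, 'x, 'v) fm" where "Bot = Neg Top"
definition Or :: "('a, 'x, 'v) fm \<Rightarrow> ('a, 'x, 'v) fm \<Rightarrow> ('a, 'x, 'v) fm"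
  where "Or p q = Neg (And (Neg p) (Neg q))"
definition Imp :: "('a, 'x, 'v) fm \<Rightarrow> ('a, 'x, 'v) fm \<Rightarrow> ('a, 'x, 'v) fm"
  where "Imp p q = Neg (And p (Neg q))"
definition Iff :: "('a, 'x, 'v) fm \<Rightarrow> ('a, 'x, 'v) fm \<Rightarrow> ('a, 'x, 'v) fm"
  where "Iff p q = And (Imp p q) (Imp q p)"

primrec disj_eq :: "'x \<Rightarrow> 'v list \<Rightarrow> ('a, 'x, 'v) fm" where
  "disj_eq x [] = Bot"
| "disj_eq x (c # cs) = Or (Eq x c) (disj_eq x cs)"

definition signature :: "'a set \<Rightarrow> 'x set \<Rightarrow> ('x \<Rightarrow> 'v set) \<Rightarrow> bool" where
  "signature Ag X D \<longleftrightarrow> finite Ag \<and> Ag \<noteq> {} \<and> finite X \<and>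
     (\<forall>x\<in>X. finite (D x) \<and> D x \<noteq> {})"

primrec wf :: "'a set \<Rightarrow> 'x set \<Rightarrow> ('x \<Rightarrow> 'v set) \<Rightarrow> ('a, 'x, 'v) fm \<Rightarrow> bool" where
  "wf Ag X D Top = True"
| "wf Ag X D (Eq x c) = (x \<in> X \<and> c \<in> D x)"
| "wf Ag X D (Neg p) = wf Ag X D p"
| "wf Ag X D (And p q) = (wf Ag X D p \<and> wf Ag X D q)"
| "wf Ag X D (Box C p) = (C \<subseteq> Ag \<and> wf Ag X D p)"

definition merge :: "'a set \<Rightarrow> ('a \<Rightarrow> 'act) \<Rightarrow> ('a \<Rightarrow> 'act) \<Rightarrow> ('a \<Rightarrow> 'act)" where
  "merge C \<alpha> \<beta> = (\<lambda>i. if i \<in> C then \<alpha> i else \<beta> i)"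

text \<open>A VCL model (S, Sigma_i, o, pi) over Theta. Joint actions Sigma_C are the
  extensional functions in PiE C Sig (so Sigma_{} is a singleton).\<close>
definition is_model ::
  "'a set \<Rightarrow> 'x set \<Rightarrow> ('x \<Rightarrow> 'v set) \<Rightarrow> 's set \<Rightarrow> ('a \<Rightarrow> 'act set)
   \<Rightarrow> ('s \<Rightarrow> ('a \<Rightarrow> 'act) \<Rightarrow> 's) \<Rightarrow> ('s \<Rightarrow> 'x \<Rightarrow> 'v) \<Rightarrow> bool" where
  "is_model Ag X D S Sig out val \<longleftrightarrow>
     S \<noteq> {} \<and> (\<forall>i\<in>Ag. Sig i \<noteq> {}) \<and>
     (\<forall>s\<in>S. \<forall>\<sigma>\<in>PiE Ag Sig. out s \<sigma> \<in> S) \<and>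
     (\<forall>s\<in>S. \<forall>x\<in>X. val s x \<in> D x)"

primrec sat :: "'a set \<Rightarrow> ('a \<Rightarrow> 'act set) \<Rightarrow> ('s \<Rightarrow> ('a \<Rightarrow> 'act) \<Rightarrow> 's)
    \<Rightarrow> ('s \<Rightarrow> 'x \<Rightarrow> 'v) \<Rightarrow> 's \<Rightarrow> ('a, 'x, 'v) fm \<Rightarrow> bool" where
  "sat Ag Sig out val s Top = True"
| "sat Ag Sig out val s (Eq x c) = (val s x = c)"
| "sat Ag Sig out val s (Neg p) = (\<not> sat Ag Sig out val s p)"
| "sat Ag Sig out val s (And p q) = (sat Ag Sig out val s p \<and> sat Ag Sig out val s q)"
| "sat Ag Sig out val s (Box C p) =
     (\<exists>\<alpha>\<in>PiE C Sig. \<forall>\<beta>\<in>PiE (Ag - C) Sig. sat Ag Sig out val (out s (merge C \<alpha> \<beta>)) p)"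

primrec peval :: "(('a, 'x, 'v) fm \<Rightarrow> bool) \<Rightarrow> ('a, 'x, 'v) fm \<Rightarrow> bool" where
  "peval V Top = True"
| "peval V (Eq x c) = V (Eq x c)"
| "peval V (Neg p) = (\<not> peval V p)"
| "peval V (And p q) = (peval V p \<and> peval V q)"
| "peval V (Box C p) = V (Box C p)"

definition taut :: "('a, 'x, 'v) fm \<Rightarrow> bool" where
  "taut p \<longleftrightarrow> (\<forall>V. peval V p)"

inductive derivable :: "'a set \<Rightarrow> 'x set \<Rightarrow> ('x \<Rightarrow> 'v set) \<Rightarrow> ('a, 'x, 'v) fm \<Rightarrow> bool"
  for Ag X D where
  Taut: "wf Ag X D p \<Longrightarrow> taut p \<Longrightarrow> derivable Ag X D p"
| C1: "wf Ag X D p \<Longrightarrow> wf Ag X D q \<Longrightarrow> C \<subseteq> Ag \<Longrightarrow>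
       derivable Ag X D (Imp (Box C (And p q)) (Box C p))"
| C2: "C \<subseteq> Ag \<Longrightarrow> derivable Ag X D (Neg (Box C Bot))"
| C3: "C \<subseteq> Ag \<Longrightarrow> derivable Ag X D (Box C Top)"
| C4: "wf Ag X D p \<Longrightarrow> wf Ag X D q \<Longrightarrow> C \<subseteq> Ag \<Longrightarrow> E \<subseteq> Ag \<Longrightarrow> C \<inter> E = {} \<Longrightarrow>
       derivable Ag X D (Imp (And (Box C p) (Box E q)) (Box (C \<union> E) (And p q)))"
| C5: "wf Ag X D p \<Longrightarrow>
       derivable Ag X D (Imp (Neg (Box {} (Neg p))) (Box Ag p))"
| V1: "x \<in> X \<Longrightarrow> set cs = D x \<Longrightarrow> derivable Ag X D (disj_eq x cs)"
| V2: "x \<in> X \<Longrightarrow> c \<in> D x \<Longrightarrow> d \<in> D x \<Longrightarrow> c \<noteq> d \<Longrightarrow>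
       derivable Ag X D (Imp (Eq x c) (Neg (Eq x d)))"
| MP: "derivable Ag X D (Imp p q) \<Longrightarrow> derivable Ag X D p \<Longrightarrow> derivable Ag X D q"
| RE: "derivable Ag X D (Iff p q) \<Longrightarrow> C \<subseteq> Ag \<Longrightarrow>
       derivable Ag X D (Iff (Box C p) (Box C q))"

end

theory Submission
  imports Defs
begin

text \<open>
  Canonical model: states are the maximal consistent sets, and an action consists of a
  proposed formula, a bid and a proposed successor state. The outcome of a profile at s is a
  maximal consistent set containing every \<chi> with [\<emptyset>]\<chi> \<in> s and every proposal \<psi> whose
  group G of proposers has [G]\<psi> \<in> s (these demands are consistent by C4, C3 and C2); if
  the strict highest bidder proposes such a set, the outcome is that set. If [C]\<phi> \<in> s,
  the coalition C forces \<phi> by proposing it unanimously. If [C]\<phi> \<notin> s and C \<noteq> Ag, the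
  demands of C are consistent with \<not>\<phi> (by C1 and RE), so an agent outside C outbids C
  and steers to a maximal consistent set containing \<not>\<phi>; if C = Ag, axiom C5 gives
  [\<emptyset>]\<not>\<phi> \<in> s.
\<close>

section \<open>Propositional reasoning\<close>

primrec conjs :: "('a, 'x, 'v) fm list \<Rightarrow> ('a, 'x, 'v) fm" where
  "conjs [] = Top"
| "conjs (p # ps) = And p (conjs ps)"

lemma peval_conjs [simp]: "peval V (conjs ps) \<longleftrightarrow> (\<forall>p\<in>set ps. peval V p)"
  by (induction ps) auto

lemma wf_conjs [simp]: "wf Ag X D (conjs ps) \<longleftrightarrow> (\<forall>p\<in>set ps. wf Ag X D p)"
  by (induction ps) auto

lemma peval_derived_connectives [simp]:
  "\<not> peval V Bot"
  "peval V (Or p q) \<longleftrightarrow> peval V p \<or> peval V q"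
  "peval V (Imp p q) \<longleftrightarrow> (peval V p \<longrightarrow> peval V q)"
  "peval V (Iff p q) \<longleftrightarrow> (peval V p \<longleftrightarrow> peval V q)"
  by (auto simp: Bot_def Or_def Imp_def Iff_def)

lemma wf_derived_connectives [simp]:
  "wf Ag X D Bot"
  "wf Ag X D (Or p q) \<longleftrightarrow> wf Ag X D p \<and> wf Ag X D q"
  "wf Ag X D (Imp p q) \<longleftrightarrow> wf Ag X D p \<and> wf Ag X D q"
  "wf Ag X D (Iff p q) \<longleftrightarrow> wf Ag X D p \<and> wf Ag X D q"
  by (auto simp: Bot_def Or_def Imp_def Iff_def)

lemma wf_disj_eq: "x \<in> X \<Longrightarrow> set cs \<subseteq> D x \<Longrightarrow> wf Ag X D (disj_eq x cs)"
  by (induction cs) auto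

lemma derivable_wf: "derivable Ag X D p \<Longrightarrow> wf Ag X D p"
  by (induction rule: derivable.induct) (auto simp: wf_disj_eq)

lemma derivable_tautological_consequence:
  assumes "\<forall>p\<in>set ps. derivable Ag X D p" and "wf Ag X D q"
    and "\<forall>V. (\<forall>p\<in>set ps. peval V p) \<longrightarrow> peval V q"
  shows "derivable Ag X D q"
  using assms
proof (induction ps arbitrary: q)
  case Nil
  then show ?case by (auto intro: derivable.Taut simp: taut_def)
next
  case (Cons p ps)
  then have "derivable Ag X D (Imp p q)"
    by (intro Cons.IH) (auto dest: derivable_wf)
  then show ?case using Cons.prems(1) by (auto intro: derivable.MP)
qed

section \<open>Maximal consistent sets\<close>

locale vcl_logic =
  fixes Ag :: "'a set" and X :: "'x set" and D :: "'x \<Rightarrow> 'v set"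
begin

abbreviation provable :: "('a, 'x, 'v) fm \<Rightarrow> bool" ("\<turnstile> _" [40] 40) where
  "\<turnstile> p \<equiv> derivable Ag X D p"

abbreviation wff :: "('a, 'x, 'v) fm \<Rightarrow> bool" where
  "wff \<equiv> wf Ag X D"

definition consistent :: "('a, 'x, 'v) fm set \<Rightarrow> bool" where
  "consistent G \<longleftrightarrow> (\<forall>ps. set ps \<subseteq> G \<longrightarrow> \<not> \<turnstile> Neg (conjs ps))"

definition mcs :: "('a, 'x, 'v) fm set \<Rightarrow> bool" where
  "mcs M \<longleftrightarrow> (\<forall>p\<in>M. wff p) \<and> consistent M \<and> (\<forall>p. wff p \<longrightarrow> p \<in> M \<or> Neg p \<in> M)"

lemma consistent_subset: "consistent G \<Longrightarrow> H \<subseteq> G \<Longrightarrow> consistent H"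
  unfolding consistent_def by blast

lemma consistent_Neg_if_not_provable:
  assumes "wff p" and "\<not> \<turnstile> p"
  shows "consistent {Neg p}"
  unfolding consistent_def
proof (intro allI impI notI)
  fix ps assume "set ps \<subseteq> {Neg p}" and "\<turnstile> Neg (conjs ps)"
  then have "\<turnstile> p"
    using assms(1) by (intro derivable_tautological_consequence[of "[Neg (conjs ps)]"]) auto
  with assms(2) show False ..
qed

lemma inconsistent_insert:
  assumes "\<not> consistent (insert p G)" and "\<forall>q\<in>G. wff q" and "wff p"
  obtains ps where "set ps \<subseteq> G" and "\<turnstile> Imp (conjs ps) (Neg p)"
proof -
  obtain ps where ps: "set ps \<subseteq> insert p G" and incons: "\<turnstile> Neg (conjs ps)"
    using assms(1) by (auto simp: consistent_def)
  let ?qs = "filter (\<lambda>q. q \<noteq> p) ps"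
  have "set ?qs \<subseteq> G" using ps by auto
  moreover have "\<turnstile> Imp (conjs ?qs) (Neg p)"
    using incons \<open>set ?qs \<subseteq> G\<close> assms(2,3)
    by (intro derivable_tautological_consequence[of "[Neg (conjs ps)]"]) auto
  ultimately show thesis by (rule that)
qed

lemma consistent_insert_or_insert_Neg:
  assumes "consistent G" and "\<forall>q\<in>G. wff q" and "wff p"
  shows "consistent (insert p G) \<or> consistent (insert (Neg p) G)"
proof (rule ccontr)
  assume "\<not> ?thesis"
  then obtain ps qs where "set ps \<subseteq> G" "\<turnstile> Imp (conjs ps) (Neg p)"
    and "set qs \<subseteq> G" "\<turnstile> Imp (conjs qs) (Neg (Neg p))"
    using inconsistent_insert assms(2,3) by (metis wf.simps(3))
  moreover from this have "\<turnstile> Neg (conjs (ps @ qs))"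
    using assms(2)
    by (intro derivable_tautological_consequence
        [of "[Imp (conjs ps) (Neg p), Imp (conjs qs) (Neg (Neg p))]"]) auto
  ultimately show False using assms(1) by (auto simp: consistent_def)
qed

lemma consistent_Union_chain:
  assumes "\<C> \<noteq> {}" and "subset.chain \<A> \<C>" and "\<forall>G\<in>\<C>. consistent G"
  shows "consistent (\<Union>\<C>)"
  unfolding consistent_def
proof (intro allI impI)
  fix ps assume "set ps \<subseteq> \<Union>\<C>"
  then obtain G where "G \<in> \<C>" and "set ps \<subseteq> G"
    using finite_subset_Union_chain[OF _ _ assms(1,2)] by blast
  then show "\<not> \<turnstile> Neg (conjs ps)" using assms(3) by (auto simp: consistent_def)
qed

lemma lindenbaum:
  assumes "consistent G" and "\<forall>p\<in>G. wff p"
  obtains M where "mcs M" and "G \<subseteq> M"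
proof -
  define \<A> where "\<A> = {H. G \<subseteq> H \<and> (\<forall>p\<in>H. wff p) \<and> consistent H}"
  have "\<exists>M\<in>\<A>. \<forall>H\<in>\<A>. M \<subseteq> H \<longrightarrow> H = M"
  proof (rule subset_Zorn_nonempty)
    show "\<A> \<noteq> {}" using assms by (auto simp: \<A>_def)
  next
    fix \<C> assume "\<C> \<noteq> {}" and chain: "subset.chain \<A> \<C>"
    moreover from chain have "\<C> \<subseteq> \<A>" by (auto simp: subset.chain_def)
    ultimately show "\<Union>\<C> \<in> \<A>"
      using consistent_Union_chain[of \<C> \<A>] by (auto simp: \<A>_def)
  qed
  then obtain M where "M \<in> \<A>" and maximal: "\<forall>H\<in>\<A>. M \<subseteq> H \<longrightarrow> H = M" by blast
  then have M: "G \<subseteq> M" "\<forall>p\<in>M. wff p" "consistent M" by (auto simp: \<A>_def)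
  have extend: "q \<in> M" if "consistent (insert q M)" and "wff q" for q
  proof -
    have "insert q M \<in> \<A>" using M that by (auto simp: \<A>_def)
    then show ?thesis using maximal by blast
  qed
  have "p \<in> M \<or> Neg p \<in> M" if "wff p" for p
    using consistent_insert_or_insert_Neg[OF M(3,2) that] extend that by (metis wf.simps(3))
  with M have "mcs M" by (simp add: mcs_def)
  then show thesis using M(1) by (rule that)
qed


lemma mcs_wf: "mcs M \<Longrightarrow> p \<in> M \<Longrightarrow> wff p"
  by (auto simp: mcs_def)

lemma mcs_tautological_consequence:
  assumes "mcs M" and "set ps \<subseteq> M" and "wff q"
    and "\<forall>V. (\<forall>p\<in>set ps. peval V p) \<longrightarrow> peval V q"
  shows "q \<in> M"
proof (rule ccontr)
  assume "q \<notin> M"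
  with assms(1,3) have "set (Neg q # ps) \<subseteq> M" using assms(2) by (auto simp: mcs_def)
  moreover have "\<turnstile> Neg (conjs (Neg q # ps))"
    using assms by (intro derivable_tautological_consequence[of "[]"]) (auto dest: mcs_wf)
  ultimately show False using assms(1) unfolding mcs_def consistent_def by blast
qed

lemma mcs_derivable:
  assumes "mcs M" and "\<turnstile> p"
  shows "p \<in> M"
proof (rule ccontr)
  assume "p \<notin> M"
  with assms have "set [Neg p] \<subseteq> M" by (auto simp: mcs_def dest: derivable_wf)
  moreover have "\<turnstile> Neg (conjs [Neg p])"
    using assms(2) by (intro derivable_tautological_consequence[of "[p]"]) (auto dest: derivable_wf)
  ultimately show False using assms(1) unfolding mcs_def consistent_def by blast
qed

lemma mcs_Top: "mcs M \<Longrightarrow> Top \<in> M"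
  by (rule mcs_derivable) (auto intro: derivable.Taut simp: taut_def)

lemma mcs_MP:
  assumes "mcs M" and "\<turnstile> Imp p q" and "p \<in> M"
  shows "q \<in> M"
proof -
  have "Imp p q \<in> M" using assms(1,2) by (rule mcs_derivable)
  then show ?thesis
    using assms derivable_wf[OF assms(2)]
    by (intro mcs_tautological_consequence[of M "[Imp p q, p]"]) auto
qed

lemma mcs_Neg:
  assumes "mcs M" and "wff p"
  shows "Neg p \<in> M \<longleftrightarrow> p \<notin> M"
proof
  assume "Neg p \<in> M"
  show "p \<notin> M"
  proof
    assume "p \<in> M"
    with \<open>Neg p \<in> M\<close> have "set [p, Neg p] \<subseteq> M" by simp
    moreover have "\<turnstile> Neg (conjs [p, Neg p])"
      using assms(2) by (intro derivable_tautological_consequence[of "[]"]) auto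
    ultimately show False using assms(1) unfolding mcs_def consistent_def by blast
  qed
qed (use assms in \<open>auto simp: mcs_def\<close>)

lemma mcs_And:
  assumes "mcs M" and "wff p" and "wff q"
  shows "And p q \<in> M \<longleftrightarrow> p \<in> M \<and> q \<in> M"
proof
  assume "And p q \<in> M"
  then show "p \<in> M \<and> q \<in> M"
    using assms mcs_tautological_consequence[of M "[And p q]"] by simp
next
  assume "p \<in> M \<and> q \<in> M"
  then show "And p q \<in> M"
    using assms mcs_tautological_consequence[of M "[p, q]" "And p q"] by simp
qed

lemma mcs_Or:
  assumes "mcs M" and "wff p" and "wff q"
  shows "Or p q \<in> M \<longleftrightarrow> p \<in> M \<or> q \<in> M"
  using assms by (simp add: Or_def mcs_Neg mcs_And)

lemma mcs_Box_mono:
  assumes "mcs M" and "C \<subseteq> Ag" and "\<turnstile> Imp p q" and "Box C p \<in> M"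
  shows "Box C q \<in> M"
proof -
  have wf: "wff p" "wff q" using derivable_wf[OF assms(3)] by auto
  have "\<turnstile> Iff p (And q p)"
    using assms(3) wf by (intro derivable_tautological_consequence[of "[Imp p q]"]) auto
  then have "\<turnstile> Iff (Box C p) (Box C (And q p))" using assms(2) by (rule derivable.RE)
  then have "\<turnstile> Imp (Box C p) (Box C (And q p))"
    using wf assms(2) by (intro derivable_tautological_consequence[of "[Iff _ _]"]) auto
  then have "Box C (And q p) \<in> M" using mcs_MP assms(1,4) by blast
  then show ?thesis using mcs_MP[OF assms(1) derivable.C1[OF wf(2,1) assms(2)]] by blast
qed

lemma mcs_Box_And:
  assumes "mcs M" and "C \<subseteq> Ag" and "E \<subseteq> Ag" and "C \<inter> E = {}"
    and "Box C p \<in> M" and "Box E q \<in> M"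
  shows "Box (C \<union> E) (And p q) \<in> M"
proof (rule mcs_MP[OF assms(1)])
  have "wff p" "wff q" using mcs_wf[OF assms(1,5)] mcs_wf[OF assms(1,6)] by auto
  then show "\<turnstile> Imp (And (Box C p) (Box E q)) (Box (C \<union> E) (And p q))"
    using assms(2-4) by (rule derivable.C4)
  show "And (Box C p) (Box E q) \<in> M"
    using mcs_And[OF assms(1) mcs_wf[OF assms(1,5)] mcs_wf[OF assms(1,6)]] assms(5,6) by blast
qed

lemma mcs_Box_coalition_mono:
  assumes "mcs M" and "C \<subseteq> E" and "E \<subseteq> Ag" and "Box C p \<in> M"
  shows "Box E p \<in> M"
proof -
  have "Box (E - C) Top \<in> M"
    using assms(1,3) by (intro mcs_derivable derivable.C3) auto
  then have "Box (C \<union> (E - C)) (And p Top) \<in> M"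
    using assms by (intro mcs_Box_And) auto
  moreover have "C \<union> (E - C) = E" using assms(2) by auto
  moreover have "\<turnstile> Imp (And p Top) p"
    using mcs_wf[OF assms(1,4)] by (intro derivable_tautological_consequence[of "[]"]) auto
  ultimately show ?thesis using assms(1,3) by (metis mcs_Box_mono)
qed

lemma mcs_Box_empty_Neg:
  assumes "mcs M" and "wff p" and "Box Ag p \<notin> M"
  shows "Box {} (Neg p) \<in> M"
proof (rule ccontr)
  assume "Box {} (Neg p) \<notin> M"
  then have "Neg (Box {} (Neg p)) \<in> M" using assms(1,2) by (simp add: mcs_Neg)
  then have "Box Ag p \<in> M" using mcs_MP[OF assms(1) derivable.C5[OF assms(2)]] by blast
  with assms(3) show False ..
qed

lemma mcs_disj_eq:
  assumes "mcs M" and "x \<in> X" and "set cs \<subseteq> D x" and "disj_eq x cs \<in> M"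
  shows "\<exists>c\<in>set cs. Eq x c \<in> M"
  using assms(3,4)
proof (induction cs)
  case Nil
  then show ?case using assms(1) mcs_Top mcs_Neg[OF assms(1)] by (simp add: Bot_def)
next
  case (Cons c cs)
  then show ?case using assms(1,2) by (auto simp: mcs_Or wf_disj_eq)
qed

lemma mcs_Eq_exists:
  assumes "mcs M" and "x \<in> X" and "finite (D x)"
  shows "\<exists>c\<in>D x. Eq x c \<in> M"
proof -
  obtain cs where cs: "set cs = D x" using finite_list[OF assms(3)] by blast
  then have "disj_eq x cs \<in> M"
    using mcs_derivable[OF assms(1) derivable.V1[where D = D and Ag = Ag, OF assms(2)]] by blast
  with cs show ?thesis using mcs_disj_eq[OF assms(1,2), of cs] by auto
qed

lemma mcs_Eq_unique:
  assumes "mcs M" and "x \<in> X" and "c \<in> D x" and "d \<in> D x"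
    and "Eq x c \<in> M" and "Eq x d \<in> M"
  shows "c = d"
proof (rule ccontr)
  assume "c \<noteq> d"
  then have "Neg (Eq x d) \<in> M"
    using mcs_MP[OF assms(1) derivable.V2[where D = D and Ag = Ag, OF assms(2-4)] assms(5)] by blast
  with assms show False by (simp add: mcs_Neg)
qed

end

section \<open>The canonical model\<close>

text \<open>
  The statement fixes the type of actions to formula sets, so an action consisting of a
  proposal \<psi>, a bid k and a proposed successor state u is encoded as a formula set, with k
  written as a stack of k negations.
\<close>

definition action_enc :: "('a, 'x, 'v) fm \<times> nat \<times> ('a, 'x, 'v) fm set \<Rightarrow> ('a, 'x, 'v) fm set" where
  "action_enc = (\<lambda>(\<psi>, k, u). insert (Box {} (And \<psi> ((Neg ^^ k) Top))) (Neg ` u))"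

definition proposal :: "('a, 'x, 'v) fm set \<Rightarrow> ('a, 'x, 'v) fm" where
  "proposal a = (THE \<psi>. \<exists>k. Box {} (And \<psi> ((Neg ^^ k) Top)) \<in> a)"

definition bid :: "('a, 'x, 'v) fm set \<Rightarrow> nat" where
  "bid a = (THE k. \<exists>\<psi>. Box {} (And \<psi> ((Neg ^^ k) Top)) \<in> a)"

definition proposed_state :: "('a, 'x, 'v) fm set \<Rightarrow> ('a, 'x, 'v) fm set" where
  "proposed_state a = {p. Neg p \<in> a}"

lemma Neg_funpow_Top_inject: "(Neg ^^ k) Top = (Neg ^^ l) Top \<Longrightarrow> k = l"
proof (induction k arbitrary: l)
  case 0
  then show ?case by (cases l) auto
next
  case (Suc k)
  then show ?case by (cases l) auto
qed

lemma Box_in_action_enc_iff: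
  "Box {} (And \<psi>' ((Neg ^^ k') Top)) \<in> action_enc (\<psi>, k, u) \<longleftrightarrow> \<psi>' = \<psi> \<and> k' = k"
  by (auto simp: action_enc_def dest: Neg_funpow_Top_inject)

lemma action_enc_decode [simp]:
  "proposal (action_enc (\<psi>, k, u)) = \<psi>"
  "bid (action_enc (\<psi>, k, u)) = k"
  "proposed_state (action_enc (\<psi>, k, u)) = u"
  by (auto simp: proposal_def bid_def Box_in_action_enc_iff) (auto simp: proposed_state_def action_enc_def)

context vcl_logic
begin

definition guaranteed :: "('a, 'x, 'v) fm set \<Rightarrow> ('a, 'x, 'v) fm set" where
  "guaranteed s = {\<chi>. Box {} \<chi> \<in> s}"

definition enforced :: "('a, 'x, 'v) fm set \<Rightarrow> ('a \<Rightarrow> ('a, 'x, 'v) fm) \<Rightarrow> 'a set \<Rightarrow> ('a, 'x, 'v) fm set"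
  where "enforced s pr B = {pr i | i. i \<in> B \<and> Box {j \<in> B. pr j = pr i} (pr i) \<in> s}"

lemma guaranteed_enforced_wf: "mcs s \<Longrightarrow> p \<in> guaranteed s \<union> enforced s pr B \<Longrightarrow> wff p"
  by (auto simp: guaranteed_def enforced_def dest: mcs_wf)

lemma enforced_cong: "(\<And>i. i \<in> B \<Longrightarrow> pr i = pr' i) \<Longrightarrow> enforced s pr B = enforced s pr' B"
proof -
  assume eq: "\<And>i. i \<in> B \<Longrightarrow> pr i = pr' i"
  then have "{j \<in> B. pr j = pr i} = {j \<in> B. pr' j = pr' i}" if "i \<in> B" for i
    using that by auto
  with eq show ?thesis unfolding enforced_def by (metis (no_types, lifting))
qed

lemma enforced_uniform_outsiders:
  assumes "C \<subseteq> Ag" and "\<forall>i\<in>Ag - C. pr i = P"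
  shows "enforced s pr Ag \<subseteq> insert P (enforced s pr C)"
proof
  fix p assume "p \<in> enforced s pr Ag"
  then obtain i where i: "i \<in> Ag" "p = pr i" and box: "Box {j \<in> Ag. pr j = pr i} (pr i) \<in> s"
    unfolding enforced_def by blast
  show "p \<in> insert P (enforced s pr C)"
  proof (cases "pr i = P")
    case False
    have inside: "j \<in> C" if "j \<in> Ag" and "pr j = pr i" for j
      using that False assms(2) by (metis DiffI)
    then have "{j \<in> Ag. pr j = pr i} = {j \<in> C. pr j = pr i}" using assms(1) by auto
    moreover have "i \<in> C" using inside i(1) by blast
    ultimately show ?thesis using box i unfolding enforced_def by auto
  qed (use i in simp)
qed

lemma mcs_Box_conjs_disjoint:
  assumes "mcs s" and "distinct ps" and "\<forall>p\<in>set ps. G p \<subseteq> Ag \<and> Box (G p) p \<in> s"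
    and "\<forall>p\<in>set ps. \<forall>q\<in>set ps. p \<noteq> q \<longrightarrow> G p \<inter> G q = {}"
  shows "Box (\<Union>p\<in>set ps. G p) (conjs ps) \<in> s"
  using assms(2-4)
proof (induction ps)
  case Nil
  then show ?case using mcs_derivable[OF assms(1) derivable.C3[where C = "{}"]] by simp
next
  case (Cons p ps)
  then have "Box (\<Union>q\<in>set ps. G q) (conjs ps) \<in> s" by auto
  with Cons.prems have "Box (G p \<union> (\<Union>q\<in>set ps. G q)) (And p (conjs ps)) \<in> s"
    by (intro mcs_Box_And[OF assms(1)]) auto
  then show ?case by simp
qed

text \<open>Grouping the enforced proposals by their proposers yields disjoint coalitions, which
  superadditivity (C4) combines into the whole of B.\<close>

lemma mcs_Box_conjs_enforced:
  assumes "mcs s" and "B \<subseteq> Ag" and "set ps \<subseteq> guaranteed s \<union> enforced s pr B"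
  shows "Box B (conjs ps) \<in> s"
proof -
  define G where "G p = (if p \<in> enforced s pr B then {j \<in> B. pr j = p} else {})" for p
  have "Box (\<Union>p\<in>set (remdups ps). G p) (conjs (remdups ps)) \<in> s"
    by (rule mcs_Box_conjs_disjoint[OF assms(1)])
      (use assms(2,3) in \<open>auto simp: G_def guaranteed_def enforced_def\<close>)
  then have "Box B (conjs (remdups ps)) \<in> s"
    by (rule mcs_Box_coalition_mono[OF assms(1) _ assms(2), rotated]) (auto simp: G_def)
  moreover have "\<turnstile> Imp (conjs (remdups ps)) (conjs ps)"
    using assms(3) guaranteed_enforced_wf[OF assms(1)]
    by (intro derivable_tautological_consequence[of "[]"]) auto
  ultimately show ?thesis using mcs_Box_mono[OF assms(1,2)] by blast
qed

lemma consistent_enforced_Neg: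
  assumes "mcs s" and "C \<subseteq> Ag" and "wff \<phi>" and "Box C \<phi> \<notin> s"
  shows "consistent (insert (Neg \<phi>) (guaranteed s \<union> enforced s pr C))"
  unfolding consistent_def
proof (intro allI impI notI)
  fix ps
  assume ps: "set ps \<subseteq> insert (Neg \<phi>) (guaranteed s \<union> enforced s pr C)"
    and incons: "\<turnstile> Neg (conjs ps)"
  let ?qs = "filter (\<lambda>p. p \<noteq> Neg \<phi>) ps"
  have qs: "set ?qs \<subseteq> guaranteed s \<union> enforced s pr C" using ps by auto
  then have "Box C (conjs ?qs) \<in> s" by (rule mcs_Box_conjs_enforced[OF assms(1,2)])
  moreover have "\<turnstile> Imp (conjs ?qs) \<phi>"
    using incons qs assms(3) guaranteed_enforced_wf[OF assms(1)]
    by (intro derivable_tautological_consequence[of "[Neg (conjs ps)]"]) auto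
  ultimately have "Box C \<phi> \<in> s" using mcs_Box_mono[OF assms(1,2)] by blast
  with assms(4) show False ..
qed

definition demands :: "('a, 'x, 'v) fm set \<Rightarrow> ('a \<Rightarrow> ('a, 'x, 'v) fm set) \<Rightarrow> ('a, 'x, 'v) fm set"
  where "demands s \<sigma> = guaranteed s \<union> enforced s (\<lambda>i. proposal (\<sigma> i)) Ag"

definition top_bidder :: "('a \<Rightarrow> ('a, 'x, 'v) fm set) \<Rightarrow> 'a \<Rightarrow> bool" where
  "top_bidder \<sigma> j \<longleftrightarrow> j \<in> Ag \<and> (\<forall>i\<in>Ag - {j}. bid (\<sigma> i) < bid (\<sigma> j))"

definition outcome :: "('a, 'x, 'v) fm set \<Rightarrow> ('a \<Rightarrow> ('a, 'x, 'v) fm set) \<Rightarrow> ('a, 'x, 'v) fm set"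
  where "outcome s \<sigma> = (SOME t. mcs t \<and> demands s \<sigma> \<subseteq> t \<and>
     (\<forall>j. top_bidder \<sigma> j \<and> mcs (proposed_state (\<sigma> j)) \<and> demands s \<sigma> \<subseteq> proposed_state (\<sigma> j)
       \<longrightarrow> t = proposed_state (\<sigma> j)))"

lemma top_bidder_unique: "top_bidder \<sigma> j \<Longrightarrow> top_bidder \<sigma> j' \<Longrightarrow> j = j'"
  unfolding top_bidder_def by (metis Diff_iff not_less_iff_gr_or_eq singletonD)

lemma consistent_demands: "mcs s \<Longrightarrow> consistent (demands s \<sigma>)"
proof -
  assume s: "mcs s"
  have "Neg (Box Ag Bot) \<in> s" using mcs_derivable[OF s derivable.C2] by blast
  then have "Box Ag Bot \<notin> s" using mcs_Neg[OF s] by simp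
  then have "consistent (insert (Neg Bot) (demands s \<sigma>))"
    unfolding demands_def by (intro consistent_enforced_Neg[OF s]) auto
  then show ?thesis by (rule consistent_subset) blast
qed

lemma outcome_spec:
  assumes "mcs s"
  shows "mcs (outcome s \<sigma>) \<and> demands s \<sigma> \<subseteq> outcome s \<sigma> \<and>
    (\<forall>j. top_bidder \<sigma> j \<and> mcs (proposed_state (\<sigma> j)) \<and> demands s \<sigma> \<subseteq> proposed_state (\<sigma> j)
      \<longrightarrow> outcome s \<sigma> = proposed_state (\<sigma> j))"
  unfolding outcome_def
proof (rule someI_ex)
  let ?admissible = "\<lambda>j. top_bidder \<sigma> j \<and> mcs (proposed_state (\<sigma> j)) \<and>
    demands s \<sigma> \<subseteq> proposed_state (\<sigma> j)"
  show "\<exists>t. mcs t \<and> demands s \<sigma> \<subseteq> t \<and> (\<forall>j. ?admissible j \<longrightarrow> t = proposed_state (\<sigma> j))"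
  proof (cases "\<exists>j. ?admissible j")
    case True
    then show ?thesis using top_bidder_unique by blast
  next
    case False
    have "\<forall>p\<in>demands s \<sigma>. wff p"
      using guaranteed_enforced_wf[OF assms] by (auto simp: demands_def)
    then obtain t where "mcs t" and "demands s \<sigma> \<subseteq> t"
      using lindenbaum[OF consistent_demands[OF assms]] by blast
    with False show ?thesis by blast
  qed
qed

lemma mcs_outcome: "mcs s \<Longrightarrow> mcs (outcome s \<sigma>)"
  using outcome_spec by blast

lemma demands_subset_outcome: "mcs s \<Longrightarrow> demands s \<sigma> \<subseteq> outcome s \<sigma>"
  using outcome_spec by blast

lemma outcome_top_bidder:
  "mcs s \<Longrightarrow> top_bidder \<sigma> j \<Longrightarrow> mcs (proposed_state (\<sigma> j)) \<Longrightarrow>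
    demands s \<sigma> \<subseteq> proposed_state (\<sigma> j) \<Longrightarrow> outcome s \<sigma> = proposed_state (\<sigma> j)"
  using outcome_spec by blast

lemma unanimous_proposal_in_outcome:
  assumes "mcs s" and "C \<subseteq> Ag" and "Box C \<phi> \<in> s" and "\<forall>i\<in>C. proposal (\<sigma> i) = \<phi>"
  shows "\<phi> \<in> outcome s \<sigma>"
proof -
  have "\<phi> \<in> demands s \<sigma>"
  proof (cases "C = {}")
    case True
    then show ?thesis using assms(3) by (simp add: demands_def guaranteed_def)
  next
    case False
    then obtain i where i: "i \<in> C" by blast
    have "C \<subseteq> {j \<in> Ag. proposal (\<sigma> j) = proposal (\<sigma> i)}" using assms(2,4) i by auto
    then have "Box {j \<in> Ag. proposal (\<sigma> j) = proposal (\<sigma> i)} (proposal (\<sigma> i)) \<in> s"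
      using mcs_Box_coalition_mono[OF assms(1) _ _ assms(3)] assms(4) i by auto
    then have "proposal (\<sigma> i) \<in> enforced s (\<lambda>i. proposal (\<sigma> i)) Ag"
      using i assms(2) unfolding enforced_def by blast
    then show ?thesis using i assms(4) by (simp add: demands_def)
  qed
  then show ?thesis using demands_subset_outcome[OF assms(1)] by blast
qed

lemma Neg_in_outcome_if_not_Box_Ag:
  assumes "mcs s" and "wff \<phi>" and "Box Ag \<phi> \<notin> s"
  shows "Neg \<phi> \<in> outcome s \<sigma>"
  using mcs_Box_empty_Neg[OF assms] demands_subset_outcome[OF assms(1)]
  by (auto simp: demands_def guaranteed_def)

text \<open>The outsiders other than j propose Top, which lies in every maximal consistent set,
  so they add nothing else to what is enforced.\<close>

lemma outbidding_counter_strategy: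
  assumes "finite Ag" and "mcs s" and "C \<subseteq> Ag" and "j \<in> Ag - C" and "wff \<phi>"
    and "Box C \<phi> \<notin> s"
  shows "\<exists>\<beta>\<in>Pi\<^sub>E (Ag - C) (\<lambda>_. range action_enc). Neg \<phi> \<in> outcome s (merge C \<alpha> \<beta>)"
proof -
  let ?enf = "enforced s (\<lambda>i. proposal (\<alpha> i)) C"
  have "\<forall>p\<in>insert (Neg \<phi>) (guaranteed s \<union> ?enf). wff p"
    using assms(5) guaranteed_enforced_wf[OF assms(2)] by auto
  then obtain t where t: "mcs t" "insert (Neg \<phi>) (guaranteed s \<union> ?enf) \<subseteq> t"
    using lindenbaum[OF consistent_enforced_Neg[OF assms(2,3,5,6)]] by blast
  define K where "K = Suc (\<Sum>i\<in>C. bid (\<alpha> i))"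
  define \<beta> where "\<beta> = restrict (\<lambda>i. action_enc (Top, if i = j then K else 0, t)) (Ag - C)"
  let ?\<sigma> = "merge C \<alpha> \<beta>"
  have inside: "?\<sigma> i = \<alpha> i" if "i \<in> C" for i
    using that by (simp add: merge_def)
  have outside: "?\<sigma> i = action_enc (Top, if i = j then K else 0, t)" if "i \<in> Ag - C" for i
    using that by (simp add: merge_def \<beta>_def)
  have "top_bidder ?\<sigma> j"
    unfolding top_bidder_def
  proof (intro conjI ballI)
    show "j \<in> Ag" using assms(4) by blast
    fix i assume "i \<in> Ag - {j}"
    moreover have "bid (\<alpha> i) \<le> (\<Sum>i\<in>C. bid (\<alpha> i))" if "i \<in> C"
      using that assms(1,3) finite_subset by (intro member_le_sum) auto
    ultimately show "bid (?\<sigma> i) < bid (?\<sigma> j)"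
      using inside outside assms(4) by (cases "i \<in> C") (auto simp: K_def)
  qed
  moreover have "demands s ?\<sigma> \<subseteq> t"
  proof -
    have "enforced s (\<lambda>i. proposal (?\<sigma> i)) Ag \<subseteq> insert Top ?enf"
      using enforced_uniform_outsiders[OF assms(3), of "\<lambda>i. proposal (?\<sigma> i)" Top s]
        enforced_cong[of C "\<lambda>i. proposal (?\<sigma> i)" "\<lambda>i. proposal (\<alpha> i)" s] inside outside
      by simp
    then show ?thesis using t mcs_Top[OF t(1)] by (auto simp: demands_def)
  qed
  ultimately have "outcome s ?\<sigma> = t"
    using outcome_top_bidder[OF assms(2)] outside[OF assms(4)] t(1) by simp
  moreover have "\<beta> \<in> Pi\<^sub>E (Ag - C) (\<lambda>_. range action_enc)" by (auto simp: \<beta>_def)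
  ultimately show ?thesis using t(2) by blast
qed

lemma counter_strategy_if_not_Box:
  assumes "finite Ag" and "mcs s" and "C \<subseteq> Ag" and "wff \<phi>" and "Box C \<phi> \<notin> s"
  shows "\<exists>\<beta>\<in>Pi\<^sub>E (Ag - C) (\<lambda>_. range action_enc). Neg \<phi> \<in> outcome s (merge C \<alpha> \<beta>)"
proof (cases "C = Ag")
  case True
  have "restrict (\<lambda>_. action_enc (Top, 0, {})) (Ag - C) \<in> Pi\<^sub>E (Ag - C) (\<lambda>_. range action_enc)"
    by auto
  then show ?thesis using Neg_in_outcome_if_not_Box_Ag[OF assms(2,4)] assms(5) True by blast
next
  case False
  then obtain j where "j \<in> Ag - C" using assms(3) by blast
  then show ?thesis using outbidding_counter_strategy[OF assms(1-3) _ assms(4,5)] by blast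
qed

definition canonical_val :: "('a, 'x, 'v) fm set \<Rightarrow> 'x \<Rightarrow> 'v" where
  "canonical_val s x = (SOME c. c \<in> D x \<and> Eq x c \<in> s)"

lemma canonical_val:
  assumes "mcs s" and "x \<in> X" and "finite (D x)"
  shows "canonical_val s x \<in> D x \<and> Eq x (canonical_val s x) \<in> s"
proof -
  from mcs_Eq_exists[OF assms] have "\<exists>c. c \<in> D x \<and> Eq x c \<in> s" by blast
  then show ?thesis unfolding canonical_val_def by (rule someI_ex)
qed

abbreviation canonical_sat :: "('a, 'x, 'v) fm set \<Rightarrow> ('a, 'x, 'v) fm \<Rightarrow> bool" where
  "canonical_sat \<equiv> sat Ag (\<lambda>_. range action_enc) outcome canonical_val"

lemma truth_lemma:
  assumes "signature Ag X D" and "wff \<phi>" and "mcs s"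
  shows "canonical_sat s \<phi> \<longleftrightarrow> \<phi> \<in> s"
  using assms(2,3)
proof (induction \<phi> arbitrary: s)
  case Top
  then show ?case by (simp add: mcs_Top)
next
  case (Eq x c)
  then have "x \<in> X" and "c \<in> D x" and "finite (D x)" using assms(1) by (auto simp: signature_def)
  then show ?case
    using canonical_val[OF Eq.prems(2)] mcs_Eq_unique[OF Eq.prems(2)] by auto
next
  case (Neg \<phi>)
  then show ?case by (simp add: mcs_Neg)
next
  case (And \<phi> \<psi>)
  then show ?case by (simp add: mcs_And)
next
  case (Box C \<phi>)
  then have s: "mcs s" and C: "C \<subseteq> Ag" and \<phi>: "wff \<phi>" by auto
  have IH: "canonical_sat (outcome s \<sigma>) \<phi> \<longleftrightarrow> \<phi> \<in> outcome s \<sigma>" for \<sigma>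
    using Box.IH[OF \<phi> mcs_outcome[OF s]] .
  show ?case
  proof
    assume "Box C \<phi> \<in> s"
    let ?\<alpha> = "restrict (\<lambda>_. action_enc (\<phi>, 0, {})) C"
    have "\<phi> \<in> outcome s (merge C ?\<alpha> \<beta>)" for \<beta>
      using unanimous_proposal_in_outcome[OF s C \<open>Box C \<phi> \<in> s\<close>] by (simp add: merge_def)
    then show "canonical_sat s (Box C \<phi>)" using IH by (auto intro!: bexI[of _ ?\<alpha>])
  next
    assume sat: "canonical_sat s (Box C \<phi>)"
    show "Box C \<phi> \<in> s"
    proof (rule ccontr)
      assume "Box C \<phi> \<notin> s"
      from sat obtain \<alpha> where \<alpha>:
        "\<forall>\<beta>\<in>Pi\<^sub>E (Ag - C) (\<lambda>_. range action_enc). canonical_sat (outcome s (merge C \<alpha> \<beta>)) \<phi>"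
        by auto
      have "finite Ag" using assms(1) by (simp add: signature_def)
      then obtain \<beta> where "\<beta> \<in> Pi\<^sub>E (Ag - C) (\<lambda>_. range action_enc)"
        and "Neg \<phi> \<in> outcome s (merge C \<alpha> \<beta>)"
        using counter_strategy_if_not_Box[OF _ s C \<phi> \<open>Box C \<phi> \<notin> s\<close>] by blast
      with \<alpha> IH show False using mcs_Neg[OF mcs_outcome[OF s] \<phi>] by blast
    qed
  qed
qed

lemma is_model_canonical:
  assumes "signature Ag X D" and "mcs s"
  shows "is_model Ag X D {M. mcs M} (\<lambda>_. range action_enc) outcome canonical_val"
  using assms canonical_val mcs_outcome unfolding is_model_def signature_def by auto

end

theorem mainTheorem9:
  fixes Ag :: "'a set" and X :: "'x set" and D :: "'x \<Rightarrow> 'v set"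
    and \<phi> :: "('a, 'x, 'v) fm"
  assumes "signature Ag X D"
    and "wf Ag X D \<phi>"
    and "\<forall>(S :: ('a, 'x, 'v) fm set set) (Sig :: 'a \<Rightarrow> ('a, 'x, 'v) fm set set) out val.
           is_model Ag X D S Sig out val \<longrightarrow> (\<forall>s\<in>S. sat Ag Sig out val s \<phi>)"
  shows "derivable Ag X D \<phi>"
proof (rule ccontr)
  interpret vcl_logic Ag X D .
  assume "\<not> derivable Ag X D \<phi>"
  then obtain M where M: "mcs M" "Neg \<phi> \<in> M"
    using lindenbaum[OF consistent_Neg_if_not_provable[OF assms(2)]] assms(2) by auto
  then have "canonical_sat M \<phi>"
    using assms(3) is_model_canonical[OF assms(1) M(1)] by blast
  then have "\<phi> \<in> M" using truth_lemma[OF assms(1,2) M(1)] by blast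
  with M show False using mcs_Neg[OF M(1) assms(2)] by blast
qed

end
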